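(* Let $L$ be a Latin square of order $n$ and let $\sigma=(\alpha,\beta,\gamma;(123))$ be an autoparatopism of $L$. Suppose $(i,j,k)\in O(L)$, and let $a=o_{\alpha\beta\gamma}(i)$, $b=o_{\beta\gamma\alpha}(j)$ and $c=o_{\gamma\alpha\beta}(k)$. Then $$\operatorname{lcm}(a,b)=\operatorname{lcm}(a,c)=\operatorname{lcm}(b,c)=\operatorname{lcm}(a,b,c).$$
   Context: A Latin square $L$ of order $n$ is an $n\times n$ array with rows, columns and symbols indexed by $[n]$, in which each symbol occurs exactly once in each row and each column. Its set of triples is $O(L)=\{(i,j,L(i,j))\}$. Permutations act on the right and are composed left to right. A paratopism $\sigma=(\alpha,\beta,\gamma;\delta)$, with $\alpha,\beta,\gamma\in\mathcal S_n$ and $\delta\in\mathcal S_3$, maps $L$ to $L^\sigma$ by replacing each triple $(x,y,z)$ with $(x\alpha,y\beta,z\gamma)$ and then permuting coordinates according to $\delta$. For $\delta=(123)$ the triple $(x,y,z)$ maps to $(z\gamma,x\alpha,y\beta)$. $\sigma$ is an autoparatopism of $L$ if $L^\sigma=L$. $o_\pi(i)$ is the length of the cycle of $\pi$ containing $i$, with fixed points counting as cycles of length $1$. *)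

theory Defs
  imports "HOL-Combinatorics.Permutations"
begin

text \<open>Symbols, rows, columns indexed by [n] = {0..<n}.\<close>

definition latin_square :: "nat \<Rightarrow> (nat \<Rightarrow> nat \<Rightarrow> nat) \<Rightarrow> bool" where
  "latin_square n L \<longleftrightarrow>
     (\<forall>i<n. \<forall>j<n. L i j < n) \<and>
     (\<forall>i<n. \<forall>s<n. \<exists>!j. j < n \<and> L i j = s) \<and>
     (\<forall>j<n. \<forall>s<n. \<exists>!i. i < n \<and> L i j = s)"

definition triples :: "nat \<Rightarrow> (nat \<Rightarrow> nat \<Rightarrow> nat) \<Rightarrow> (nat \<times> nat \<times> nat) set" where
  "triples n L = {(i, j, L i j) | i j. i < n \<and> j < n}"

definition paratopism_123 ::
  "(nat \<Rightarrow> nat) \<Rightarrow> (nat \<Rightarrow> nat) \<Rightarrow> (nat \<Rightarrow> nat) \<Rightarrow> (nat \<times> nat \<times> nat) set \<Rightarrow> (nat \<times> nat \<times> nat) set" where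
  "paratopism_123 \<alpha> \<beta> \<gamma> T = (\<lambda>(x, y, z). (\<gamma> z, \<alpha> x, \<beta> y)) ` T"

definition autoparatopism_123 ::
  "nat \<Rightarrow> (nat \<Rightarrow> nat \<Rightarrow> nat) \<Rightarrow> (nat \<Rightarrow> nat) \<Rightarrow> (nat \<Rightarrow> nat) \<Rightarrow> (nat \<Rightarrow> nat) \<Rightarrow> bool" where
  "autoparatopism_123 n L \<alpha> \<beta> \<gamma> \<longleftrightarrow>
     \<alpha> permutes {0..<n} \<and> \<beta> permutes {0..<n} \<and> \<gamma> permutes {0..<n} \<and>
     paratopism_123 \<alpha> \<beta> \<gamma> (triples n L) = triples n L"

definition cycle_len :: "(nat \<Rightarrow> nat) \<Rightarrow> nat \<Rightarrow> nat" where
  "cycle_len \<pi> i = (LEAST k. 0 < k \<and> (\<pi> ^^ k) i = i)"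

end

theory Submission
  imports Defs "HOL-Combinatorics.Cycles"
begin

text \<open>Applying \<sigma> three times returns every coordinate to its own position, so \<sigma> cubed acts
on triples coordinatewise by the composites \<alpha>\<beta>\<gamma>, \<beta>\<gamma>\<alpha>, \<gamma>\<alpha>\<beta> (right-action notation); hence the
triple obtained from (i, j, k) by their m-th powers again lies in O(L). In a Latin square any
two coordinates of a triple determine the third. So if m is a multiple of two of a, b, c, two
coordinates of that triple agree with those of (i, j, k), hence so does the third, and m is a
multiple of the remaining cycle length too. Thus each of a, b, c divides the lcm of the other
two.\<close>

lemma cycle_len_dvd_iff:
  assumes "permutation p"
  shows "(p ^^ m) x = x \<longleftrightarrow> cycle_len p x dvd m"
proof -
  define k where "k = cycle_len p x"
  obtain N where "p ^^ N = id" "N > 0"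
    using permutation_is_nilpotent[OF assms] by blast
  then have "0 < N \<and> (p ^^ N) x = x" by simp
  then have "0 < k \<and> (p ^^ k) x = x"
    unfolding k_def cycle_len_def by (rule LeastI)
  then have k_pos: "0 < k" and k_fix: "(p ^^ k) x = x" by auto
  have k_least: "k \<le> r" if "0 < r" "(p ^^ r) x = x" for r
    unfolding k_def cycle_len_def using that by (simp add: Least_le)
  have multiple_fix: "(p ^^ (k * q)) x = x" for q
    by (induction q) (simp_all add: funpow_add k_fix)
  have mod_fix: "(p ^^ m) x = (p ^^ (m mod k)) x"
  proof -
    have "p ^^ m = p ^^ (m mod k) \<circ> p ^^ (k * (m div k))"
      by (simp add: funpow_add[symmetric])
    then show ?thesis by (simp add: multiple_fix)
  qed
  show ?thesis
  proof
    assume "(p ^^ m) x = x"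
    then have "(p ^^ (m mod k)) x = x" by (simp add: mod_fix)
    moreover have "m mod k < k" using k_pos by simp
    ultimately have "m mod k = 0" using k_least by (meson not_gr0 not_le)
    then show "cycle_len p x dvd m" unfolding k_def[symmetric] by auto
  next
    assume "cycle_len p x dvd m"
    then show "(p ^^ m) x = x" unfolding k_def[symmetric] using multiple_fix by auto
  qed
qed

lemma latin_square_triples_determined:
  assumes "latin_square n L" "(x, y, z) \<in> triples n L" "(x', y', z') \<in> triples n L"
  shows "x = x' \<Longrightarrow> y = y' \<Longrightarrow> z = z'"
    and "x = x' \<Longrightarrow> z = z' \<Longrightarrow> y = y'"
    and "y = y' \<Longrightarrow> z = z' \<Longrightarrow> x = x'"
proof -
  have in_range: "x < n" "y < n" "z = L x y" "x' < n" "y' < n" "z' = L x' y'"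
    using assms(2,3) unfolding triples_def by auto
  have symbols: "\<forall>i<n. \<forall>j<n. L i j < n"
    and rows: "\<forall>i<n. \<forall>s<n. \<exists>!j. j < n \<and> L i j = s"
    and cols: "\<forall>j<n. \<forall>s<n. \<exists>!i. i < n \<and> L i j = s"
    using assms(1) unfolding latin_square_def by auto
  have "z < n" using symbols in_range by simp
  show "x = x' \<Longrightarrow> y = y' \<Longrightarrow> z = z'" using in_range by simp
  show "x = x' \<Longrightarrow> z = z' \<Longrightarrow> y = y'"
    using rows[rule_format, OF in_range(1) \<open>z < n\<close>] in_range by auto
  show "y = y' \<Longrightarrow> z = z' \<Longrightarrow> x = x'"
    using cols[rule_format, OF in_range(2) \<open>z < n\<close>] in_range by auto
qed

lemma paratopism_123_funpow_mem:
  assumes "paratopism_123 \<alpha> \<beta> \<gamma> T \<subseteq> T" "(x, y, z) \<in> T"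
  shows "(((\<gamma> \<circ> \<beta> \<circ> \<alpha>) ^^ m) x, ((\<alpha> \<circ> \<gamma> \<circ> \<beta>) ^^ m) y, ((\<beta> \<circ> \<alpha> \<circ> \<gamma>) ^^ m) z) \<in> T"
proof -
  have step: "(\<gamma> w, \<alpha> u, \<beta> v) \<in> T" if "(u, v, w) \<in> T" for u v w
    using assms(1) that unfolding paratopism_123_def by force
  show ?thesis
  proof (induction m)
    case (Suc m)
    show ?case using step[OF step[OF step[OF Suc.IH]]] by simp
  qed (simp add: assms(2))
qed

lemma lcm_eq_lcm3_if_dvd_lcm:
  fixes a b c :: "'a :: semiring_gcd"
  assumes "a dvd lcm b c" "b dvd lcm a c" "c dvd lcm a b"
  shows "lcm a b = lcm a (lcm b c) \<and> lcm a c = lcm a (lcm b c) \<and> lcm b c = lcm a (lcm b c)"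
  by (intro conjI; rule associated_eqI) (use assms in \<open>auto intro: dvd_lcmI1 dvd_lcmI2\<close>)

theorem lemma3p3:
  fixes n :: nat and L :: "nat \<Rightarrow> nat \<Rightarrow> nat" and \<alpha> \<beta> \<gamma> :: "nat \<Rightarrow> nat"
    and i j k :: nat
  assumes "latin_square n L"
    and "autoparatopism_123 n L \<alpha> \<beta> \<gamma>"
    and "(i, j, k) \<in> triples n L"
  defines "a \<equiv> cycle_len (\<gamma> \<circ> \<beta> \<circ> \<alpha>) i"
    and "b \<equiv> cycle_len (\<alpha> \<circ> \<gamma> \<circ> \<beta>) j"
    and "c \<equiv> cycle_len (\<beta> \<circ> \<alpha> \<circ> \<gamma>) k"
  shows "lcm a b = lcm a (lcm b c) \<and> lcm a c = lcm a (lcm b c) \<and> lcm b c = lcm a (lcm b c)"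
proof -
  have "permutation (\<gamma> \<circ> \<beta> \<circ> \<alpha>)" "permutation (\<alpha> \<circ> \<gamma> \<circ> \<beta>)" "permutation (\<beta> \<circ> \<alpha> \<circ> \<gamma>)"
    using assms(2) unfolding autoparatopism_123_def
    by (meson finite_atLeastLessThan permutes_compose permutes_imp_permutation)+
  note returns_iff = cycle_len_dvd_iff[OF this(1), where x = i, folded a_def]
    cycle_len_dvd_iff[OF this(2), where x = j, folded b_def]
    cycle_len_dvd_iff[OF this(3), where x = k, folded c_def]
  have "paratopism_123 \<alpha> \<beta> \<gamma> (triples n L) \<subseteq> triples n L"
    using assms(2) unfolding autoparatopism_123_def by simp
  note determined = latin_square_triples_determined[OF assms(1)
      paratopism_123_funpow_mem[OF this assms(3)] assms(3)]
  show ?thesis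
  proof (rule lcm_eq_lcm3_if_dvd_lcm)
    show "a dvd lcm b c" using determined(3)[of "lcm b c"] returns_iff[of "lcm b c"] by simp
    show "b dvd lcm a c" using determined(2)[of "lcm a c"] returns_iff[of "lcm a c"] by simp
    show "c dvd lcm a b" using determined(1)[of "lcm a b"] returns_iff[of "lcm a b"] by simp
  qed
qed

end
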